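(* Let $\mathcal{T}=\{T(t,s):t\ge s\}$ be a linear evolution process in a Banach space $X$, $f:\mathbb{R}\times X\to X$ continuous and differentiable in $x$ with continuous derivative, and assume the mild solutions $y(t,s;y_s)=T(t,s)y_s+\int_s^tT(t,\tau)f(\tau,y(\tau,s;y_s))d\tau$ exist for all $t\ge s$, defining the nonlinear evolution process $\mathcal{S}_f$, $S_f(t,s)y_s=y(t,s;y_s)$. Let $\xi$ be a global solution of $\mathcal{S}_f$ which is nonuniform hyperbolic, i.e. its linearized process $\mathcal{L}_f$ admits a nonuniform exponential dichotomy with projections $\{Q(s)\}$, bound $K(s)=De^{\nu|s|}$ and exponent $\alpha>\nu$. Then: (a) every bounded global solution $\varphi$ of $\mathcal{S}_f$ satisfies $$\varphi(t)=\int_{-\infty}^{+\infty}G_f(t,\tau)\big[f(\tau,\varphi(\tau))-D_xf(\tau,\xi(\tau))\varphi(\tau)\big]d\tau,\quad t\in\mathbb{R},$$ where $G_f(t,s)=L_f(t,s)(Id_X-Q(s))$ for $t\ge s$ and $G_f(t,s)=-L_f(t,s)Q(s)$ for $t<s$; (b) if moreover $\xi$ is bounded and $$\rho(\epsilon):=\sup_{0<\|x\|\le\epsilon}\sup_{t\in\mathbb{R}}\frac{e^{\nu|t|}\|f(t,\xi(t)+x)-f(t,\xi(t))-D_xf(t,\xi(t))x\|}{\|x\|}\to0\ \text{ as }\epsilon\to0,$$ then $\xi$ is isolated in $C_b(\mathbb{R},X)$: there is $\epsilon>0$ such that $\xi$ is the only bounded global solution $\varphi$ of $\mathcal{S}_f$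 with $\sup_{t\in\mathbb{R}}\|\varphi(t)-\xi(t)\|\le\epsilon$.
   Context: A global solution of an evolution process $\mathcal{S}$ is a map $\xi:\mathbb{R}\to X$ with $S(t,s)\xi(s)=\xi(t)$ for all $t\ge s$. The linearized evolution process of $\mathcal{S}_f$ along $\xi$ is the linear evolution process $\mathcal{L}_f=\{L_f(t,s):t\ge s\}$ satisfying $L_f(t,s)=T(t,s)+\int_s^tT(t,\tau)D_xf(\tau,\xi(\tau))L_f(\tau,s)d\tau$; $\xi$ is a nonuniform hyperbolic solution if $\mathcal{L}_f$ admits a nonuniform exponential dichotomy. A linear evolution process $\{S(t,s)\}$ admits a nonuniform exponential dichotomy if there is a family of bounded projections $\{Q(t)\}_{t\in\mathbb{R}}$ with: (i) $Q(t)S(t,s)=S(t,s)Q(s)$ for $t\ge s$; (ii) $S(t,s)|_{R(Q(s))}:R(Q(s))\to R(Q(t))$ is an isomorphism for $t\ge s$, with inverse denoted $S(s,t)$; (iii) there are a continuous $K:\mathbb{R}\to[1,\infty)$ with $K(s)\le De^{\nu|s|}$ ($D\ge1$, $\nu\ge0$) and $\alpha>0$ with $\|S(t,s)(Id-Q(s))\|\le K(s)e^{-\alpha(t-s)}$ for $t\ge s$ and $\|S(t,s)Q(s)\|\le K(s)e^{\alpha(t-s)}$ for $t<s$. $C_b(\mathbb{R},X)$ denotes the bounded continuous functions $\mathbb{R}\to X$ with the sup norm. *)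

theory Defs
  imports "HOL-Analysis.Analysis"
begin

definition evolution_process :: "(real \<Rightarrow> real \<Rightarrow> 'a::real_normed_vector \<Rightarrow> 'a) \<Rightarrow> bool" where
  "evolution_process S \<longleftrightarrow>
     (\<forall>t x. S t t x = x) \<and>
     (\<forall>t \<tau> s x. s \<le> \<tau> \<and> \<tau> \<le> t \<longrightarrow> S t \<tau> (S \<tau> s x) = S t s x) \<and>
     continuous_on {(t, s, x). s \<le> t} (\<lambda>(t, s, x). S t s x)"

definition linear_evolution_process :: "(real \<Rightarrow> real \<Rightarrow> 'a::real_normed_vector \<Rightarrow>\<^sub>L 'a) \<Rightarrow> bool" where
  "linear_evolution_process T \<longleftrightarrow> evolution_process (\<lambda>t s. blinfun_apply (T t s))"

definition global_solution :: "(real \<Rightarrow> real \<Rightarrow> 'a \<Rightarrow> 'a) \<Rightarrow> (real \<Rightarrow> 'a) \<Rightarrow> bool" where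
  "global_solution S \<xi> \<longleftrightarrow> (\<forall>t s. s \<le> t \<longrightarrow> S t s (\<xi> s) = \<xi> t)"

(* Backward operator S(t,s) for t < s on R(Q(s)): inverse of S(s,t) restricted to R(Q(t)). *)
definition back_op :: "(real \<Rightarrow> real \<Rightarrow> 'a::real_normed_vector \<Rightarrow>\<^sub>L 'a) \<Rightarrow> (real \<Rightarrow> 'a \<Rightarrow>\<^sub>L 'a)
    \<Rightarrow> real \<Rightarrow> real \<Rightarrow> 'a \<Rightarrow> 'a" where
  "back_op S Q t s = the_inv_into (range (blinfun_apply (Q t))) (blinfun_apply (S s t))"

definition nonuniform_exp_dichotomy ::
  "(real \<Rightarrow> real \<Rightarrow> 'a::real_normed_vector \<Rightarrow>\<^sub>L 'a) \<Rightarrow> (real \<Rightarrow> 'a \<Rightarrow>\<^sub>L 'a)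
    \<Rightarrow> real \<Rightarrow> real \<Rightarrow> real \<Rightarrow> bool" where
  "nonuniform_exp_dichotomy S Q D \<nu> \<alpha> \<longleftrightarrow>
     D \<ge> 1 \<and> \<nu> \<ge> 0 \<and> \<alpha> > 0 \<and>
     (\<forall>t. Q t o\<^sub>L Q t = Q t) \<and>
     (\<forall>t s. s \<le> t \<longrightarrow> Q t o\<^sub>L S t s = S t s o\<^sub>L Q s) \<and>
     (\<forall>t s. s \<le> t \<longrightarrow>
        bij_betw (blinfun_apply (S t s)) (range (blinfun_apply (Q s))) (range (blinfun_apply (Q t)))) \<and>
     (\<forall>t s x. s \<le> t \<longrightarrow>
        norm (S t s (x - Q s x)) \<le> D * exp (\<nu> * \<bar>s\<bar>) * exp (- \<alpha> * (t - s)) * norm x) \<and>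
     (\<forall>t s x. t < s \<longrightarrow>
        norm (back_op S Q t s (Q s x)) \<le> D * exp (\<nu> * \<bar>s\<bar>) * exp (\<alpha> * (t - s)) * norm x)"

definition green :: "(real \<Rightarrow> real \<Rightarrow> 'a::real_normed_vector \<Rightarrow>\<^sub>L 'a) \<Rightarrow> (real \<Rightarrow> 'a \<Rightarrow>\<^sub>L 'a)
    \<Rightarrow> real \<Rightarrow> real \<Rightarrow> 'a \<Rightarrow> 'a" where
  "green S Q t s x = (if s \<le> t then S t s (x - Q s x) else - back_op S Q t s (Q s x))"

definition rho :: "(real \<Rightarrow> 'a::real_normed_vector \<Rightarrow> 'a) \<Rightarrow> (real \<Rightarrow> 'a \<Rightarrow> 'a \<Rightarrow>\<^sub>L 'a)
    \<Rightarrow> (real \<Rightarrow> 'a) \<Rightarrow> real \<Rightarrow> real \<Rightarrow> ereal" where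
  "rho f Df \<xi> \<nu> \<epsilon> = (SUP (t, x) \<in> {(t, x). 0 < norm x \<and> norm x \<le> \<epsilon>}.
      ereal (exp (\<nu> * \<bar>t\<bar>) * norm (f t (\<xi> t + x) - f t (\<xi> t) - Df t (\<xi> t) x) / norm x))"

end

theory Submission
  imports Defs "HOL-Real_Asymp.Real_Asymp"
begin

(* Part (a) is a variation-of-constants argument. A bounded global solution \<phi> solves
  \<phi>(t) = L(t,s)\<phi>(s) + \<integral>\<^sub>s\<^sup>t L(t,\<tau>) g(\<tau>) d\<tau> with g = f(\<phi>) - D\<^sub>xf(\<xi>)\<phi>, which follows
  from the two mild equations without Fubini: on each subinterval [b,a] the identity holds
  up to an error O((a-b)\<^sup>2), and summing over fine partitions shows the error is zero. Splitting with Q and letting s \<rightarrow> -\<infinity> in the stable part and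
  solving backwards from b \<rightarrow> +\<infinity> in the unstable part, the boundary terms decay like
  e^((\<nu>-\<alpha>)|s|) because \<alpha> > \<nu>, which leaves the Green integral.

  For part (b), \<psi> = \<phi> - \<xi> satisfies the same identity with g the remainder of the
  linearisation, which is bounded by \<rho>(\<epsilon>) e^(-\<nu>|\<tau>|) sup|\<psi>|. The Green bounds then give
  sup|\<psi>| \<le> (2D/\<alpha>) \<rho>(\<epsilon>) sup|\<psi>|, forcing \<psi> = 0 once \<rho>(\<epsilon>) < \<alpha>/(4D). *)

lemma endpoints_eq_of_quadratic_increments:
  fixes F :: "real \<Rightarrow> 'a::real_normed_vector"
  assumes st: "s0 \<le> t0"
    and le: "\<And>b a. s0 \<le> b \<Longrightarrow> b \<le> a \<Longrightarrow> a \<le> t0 \<Longrightarrow> norm (F a - F b) \<le> K * (a - b)\<^sup>2"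
  shows "F t0 = F s0"
proof -
  define \<Delta> where "\<Delta> = t0 - s0"
  have \<Delta>: "\<Delta> \<ge> 0" using st by (simp add: \<Delta>_def)
  have main: "norm (F t0 - F s0) \<le> K * \<Delta>\<^sup>2 / real n" if n: "n \<ge> 1" for n :: nat
  proof -
    define d where "d = \<Delta> / real n"
    have d: "d \<ge> 0" using \<Delta> n by (simp add: d_def)
    have "k \<le> n \<longrightarrow> norm (F (s0 + real k * d) - F s0) \<le> real k * K * d\<^sup>2" for k
    proof (induction k)
      case 0 then show ?case by simp
    next
      case (Suc k)
      show ?case
      proof
        assume kn: "Suc k \<le> n"
        have "real (Suc k) * d \<le> real n * d" using kn d by (intro mult_right_mono) auto
        then have le1: "s0 + real (Suc k) * d \<le> t0" using n by (simp add: d_def \<Delta>_def)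
        have "norm (F (s0 + real (Suc k) * d) - F (s0 + real k * d)) \<le> K * d\<^sup>2"
          using le[of "s0 + real k * d" "s0 + real (Suc k) * d"] d le1 by (simp add: algebra_simps)
        moreover have "norm (F (s0 + real (Suc k) * d) - F s0) \<le>
            norm (F (s0 + real (Suc k) * d) - F (s0 + real k * d)) + norm (F (s0 + real k * d) - F s0)"
          by (rule norm_diff_triangle_le[OF order_refl order_refl])
        ultimately show "norm (F (s0 + real (Suc k) * d) - F s0) \<le> real (Suc k) * K * d\<^sup>2"
          using Suc kn by (simp add: algebra_simps)
      qed
    qed
    moreover have "s0 + real n * d = t0" using n by (simp add: d_def \<Delta>_def)
    ultimately have "norm (F t0 - F s0) \<le> real n * K * d\<^sup>2" by force
    also have "\<dots> = K * \<Delta>\<^sup>2 / real n" using n by (simp add: d_def power2_eq_square field_simps)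
    finally show ?thesis .
  qed
  have "((\<lambda>n. K * \<Delta>\<^sup>2 / real n) \<longlongrightarrow> 0) sequentially"
    by real_asymp
  then have "norm (F t0 - F s0) \<le> 0"
    by (rule tendsto_lowerbound) (use main in \<open>auto simp: eventually_at_top_linorder\<close>)
  then show ?thesis by simp
qed

lemma norm_integral_le_length:
  fixes h :: "real \<Rightarrow> 'a::real_normed_vector"
  assumes "b \<le> a" "h integrable_on {b..a}" "\<And>\<tau>. b \<le> \<tau> \<Longrightarrow> \<tau> \<le> a \<Longrightarrow> norm (h \<tau>) \<le> C"
  shows "norm (integral {b..a} h) \<le> C * (a - b)"
proof -
  have "0 \<le> C" using assms(1) assms(3)[of b] norm_ge_zero order_trans by blast
  then have "norm (integral {b..a} h) \<le> C * Henstock_Kurzweil_Integration.content {b..a}"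
    by (intro has_integral_bound_real[of C "{}"]) (use assms in auto)
  then show ?thesis using assms(1) by simp
qed

lemma norm_le_of_has_integral_bound:
  fixes h :: "real \<Rightarrow> 'a::banach"
  assumes "(h has_integral I) S" "(w has_integral W) S" "\<And>x. x \<in> S \<Longrightarrow> norm (h x) \<le> w x"
  shows "norm I \<le> W"
  using integral_norm_bound_integral[of h S w] assms by (metis has_integral_integrable integral_unique)

lemma norm_le_of_eventually_le_add_null:
  fixes x :: "'a::real_normed_vector" and r :: "'c \<Rightarrow> 'b::real_normed_vector"
  assumes "(r \<longlongrightarrow> 0) F" "F \<noteq> bot" "\<forall>\<^sub>F a in F. norm x \<le> c + norm (r a)"
  shows "norm x \<le> c"
proof -
  have "((\<lambda>a. c + norm (r a)) \<longlongrightarrow> c + 0) F"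
    by (intro tendsto_add tendsto_const tendsto_norm_zero assms(1))
  then show ?thesis using tendsto_lowerbound assms(2,3) by fastforce
qed

lemma evolution_norm_bounded_on_interval:
  fixes T :: "real \<Rightarrow> real \<Rightarrow> 'a::real_normed_vector \<Rightarrow>\<^sub>L 'a"
  assumes cont: "continuous_on {(t, s, x). s \<le> t} (\<lambda>(t, s, x). blinfun_apply (T t s) x)"
  obtains M where "M \<ge> 0" "\<And>a b x. s0 \<le> b \<Longrightarrow> b \<le> a \<Longrightarrow> a \<le> t0 \<Longrightarrow> norm (T a b x) \<le> M * norm x"
proof (rule ccontr)
  assume "\<not> thesis"
  with that have "\<forall>n::nat. \<exists>a b x. s0 \<le> b \<and> b \<le> a \<and> a \<le> t0 \<and> norm (T a b x) > (real n + 1)\<^sup>2 * norm x"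
    by (metis not_le zero_le_power2 add_nonneg_nonneg of_nat_0_le_iff zero_le_one)
  then obtain A Bn X where ABX: "\<And>n. s0 \<le> Bn n \<and> Bn n \<le> A n \<and> A n \<le> t0 \<and>
      norm (T (A n) (Bn n) (X n)) > (real n + 1)\<^sup>2 * norm (X n)"
    by metis
  have Xnz: "X n \<noteq> 0" for n using ABX[of n] by auto
  \<comment> \<open>The unit ball is not compact, so the witnesses are rescaled to tend to 0; their
    images keep norm \<ge> 1, contradicting continuity at x = 0.\<close>
  define Y where "Y n = (1 / (norm (X n) * (real n + 1))) *\<^sub>R X n" for n
  have normY: "norm (Y n) = 1 / (real n + 1)" for n
    using Xnz[of n] by (simp add: Y_def)
  have TY: "norm (T (A n) (Bn n) (Y n)) \<ge> 1" for n
  proof -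
    have pos: "norm (X n) * (real n + 1) > 0" using Xnz[of n] by simp
    have "norm (T (A n) (Bn n) (Y n)) = norm (T (A n) (Bn n) (X n)) / (norm (X n) * (real n + 1))"
      using pos by (simp add: Y_def blinfun.scaleR_right)
    also have "\<dots> \<ge> (real n + 1)\<^sup>2 * norm (X n) / (norm (X n) * (real n + 1))"
      using ABX[of n] pos by (intro divide_right_mono) auto
    finally have "norm (T (A n) (Bn n) (Y n)) \<ge> real n + 1"
      using pos Xnz[of n] by (simp add: power2_eq_square)
    then show ?thesis by simp
  qed
  define K where "K = ({s0..t0} \<times> {s0..t0}) \<inter> {p::real\<times>real. snd p \<le> fst p}"
  have "compact K" unfolding K_def
    by (intro compact_Int_closed compact_Times compact_Icc closed_Collect_le continuous_intros)
  moreover have "\<forall>n. (A n, Bn n) \<in> K" using ABX by (auto simp: K_def intro: order_trans)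
  ultimately obtain l r where l: "l \<in> K" and r: "strict_mono r"
      and lim: "((\<lambda>n. (A n, Bn n)) \<circ> r) \<longlonglongrightarrow> l"
    unfolding compact_def by metis
  have "(\<lambda>n. norm (Y n)) \<longlonglongrightarrow> 0"
    using LIMSEQ_inverse_real_of_nat by (simp add: normY inverse_eq_divide add.commute)
  then have "Y \<longlonglongrightarrow> 0" by (simp add: tendsto_norm_zero_iff)
  then have "(\<lambda>k. (A (r k), Bn (r k), Y (r k))) \<longlonglongrightarrow> (fst l, snd l, 0)"
    using tendsto_fst[OF lim] tendsto_snd[OF lim] LIMSEQ_subseq_LIMSEQ[OF _ r]
    by (intro tendsto_Pair) (auto simp: o_def)
  then have "((\<lambda>k. (\<lambda>(t, s, x). blinfun_apply (T t s) x) (A (r k), Bn (r k), Y (r k)))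
          \<longlongrightarrow> (\<lambda>(t, s, x). blinfun_apply (T t s) x) (fst l, snd l, 0)) sequentially"
    by (rule continuous_on_tendsto_compose[OF cont]) (use l ABX in \<open>auto simp: K_def\<close>)
  then have "(\<lambda>k. norm (T (A (r k)) (Bn (r k)) (Y (r k)))) \<longlonglongrightarrow> 0"
    by (simp add: tendsto_norm_zero_iff)
  moreover have "\<forall>\<^sub>F k in sequentially. 1 \<le> norm (T (A (r k)) (Bn (r k)) (Y (r k)))"
    using TY by simp
  ultimately have "(1::real) \<le> 0" by (rule tendsto_lowerbound) simp
  then show False by simp
qed

lemma has_integral_UNIV_of_halflines:
  fixes G :: "real \<Rightarrow> 'a::banach"
  assumes lo: "\<And>a. a \<le> t \<Longrightarrow> (G has_integral (P - r a)) {a..t}" and r: "(r \<longlongrightarrow> 0) at_bot"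
    and hi: "\<And>b. t \<le> b \<Longrightarrow> (G has_integral (U - q b)) {t..b}" and q: "(q \<longlongrightarrow> 0) at_top"
  shows "(G has_integral (P + U)) UNIV"
proof -
  have int2: "(G has_integral (P - r a + (U - q b))) {a..b}" if "a \<le> t" "t \<le> b" for a b
    by (rule has_integral_combine[OF that lo[OF that(1)] hi[OF that(2)]])
  have intab: "G integrable_on {a..b}" for a b
  proof -
    have "G integrable_on {min a t..max b t}" using int2[of "min a t" "max b t"] by auto
    then show ?thesis
      by (cases "a \<le> b") (auto intro!: integrable_subinterval_real[of G "min a t" "max b t"])
  qed
  show ?thesis
  proof (subst has_integral_alt', intro conjI allI impI)
    fix a b :: real
    show "(\<lambda>x. if x \<in> UNIV then G x else 0) integrable_on cbox a b" using intab by simp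
  next
    fix e :: real assume e: "e > 0"
    have "\<forall>\<^sub>F a in at_bot. norm (r a) < e/2"
      using r e unfolding tendsto_iff dist_norm by (simp only: diff_zero)
    then obtain A where A: "\<And>a. a \<le> A \<Longrightarrow> norm (r a) < e/2"
      by (auto simp: eventually_at_bot_linorder)
    have "\<forall>\<^sub>F b in at_top. norm (q b) < e/2"
      using q e unfolding tendsto_iff dist_norm by (simp only: diff_zero)
    then obtain Bq where Bq: "\<And>b. b \<ge> Bq \<Longrightarrow> norm (q b) < e/2"
      by (auto simp: eventually_at_top_linorder)
    define B where "B = max (max \<bar>A\<bar> \<bar>Bq\<bar>) \<bar>t\<bar> + 1"
    have Bpos: "B > 0" by (simp add: B_def)
    show "\<exists>B>0. \<forall>a b. ball 0 B \<subseteq> cbox a b \<longrightarrow>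
             norm (integral (cbox a b) (\<lambda>x. if x \<in> UNIV then G x else 0) - (P + U)) < e"
    proof (intro exI[of _ B] conjI allI impI Bpos)
      fix a b :: real assume sub: "ball 0 B \<subseteq> cbox a b"
      have "cball 0 B \<subseteq> cbox a b"
        using closure_minimal[OF sub closed_cbox] closure_ball[OF Bpos, of 0] by metis
      then have "a \<le> -B" "B \<le> b"
        using Bpos by (auto simp: subset_iff dist_real_def)
      then have at: "a \<le> t" "t \<le> b" "a \<le> A" "Bq \<le> b"
        unfolding B_def by (auto simp: abs_if split: if_splits)
      have "integral (cbox a b) (\<lambda>x. if x \<in> UNIV then G x else 0) - (P + U) = - (r a + q b)"
        using int2[OF at(1,2)] by (simp add: integral_unique algebra_simps)
      then have "norm (integral (cbox a b) (\<lambda>x. if x \<in> UNIV then G x else 0) - (P + U))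
          \<le> norm (r a) + norm (q b)"
        by (metis norm_minus_cancel norm_triangle_ineq)
      also have "\<dots> < e" using A[OF at(3)] Bq[OF at(4)] by simp
      finally show "norm (integral (cbox a b) (\<lambda>x. if x \<in> UNIV then G x else 0) - (P + U)) < e" .
    qed
  qed
qed

lemma has_integral_exp_decay:
  fixes a t \<alpha> :: real
  assumes "a \<le> t" "0 < \<alpha>"
  shows "((\<lambda>\<tau>. exp (- \<alpha> * (t - \<tau>))) has_integral (1 - exp (- \<alpha> * (t - a))) / \<alpha>) {a..t}"
proof -
  have "((\<lambda>\<tau>. exp (- \<alpha> * (t - \<tau>))) has_integral
      (exp (- \<alpha> * (t - t)) / \<alpha> - exp (- \<alpha> * (t - a)) / \<alpha>)) {a..t}"
    using assms
    by (intro fundamental_theorem_of_calculus)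
       (auto intro!: derivative_eq_intros simp flip: has_real_derivative_iff_has_vector_derivative)
  then show ?thesis by (simp add: diff_divide_distrib)
qed

lemma has_integral_exp_growth:
  fixes b t \<alpha> :: real
  assumes "t \<le> b" "0 < \<alpha>"
  shows "((\<lambda>\<tau>. exp (\<alpha> * (t - \<tau>))) has_integral (1 - exp (\<alpha> * (t - b))) / \<alpha>) {t..b}"
proof -
  have "((\<lambda>\<tau>. exp (\<alpha> * (t - \<tau>))) has_integral
      (- exp (\<alpha> * (t - b)) / \<alpha> - (- exp (\<alpha> * (t - t)) / \<alpha>))) {t..b}"
    using assms
    by (intro fundamental_theorem_of_calculus)
       (auto intro!: derivative_eq_intros simp flip: has_real_derivative_iff_has_vector_derivative)
  then show ?thesis by (simp add: diff_divide_distrib)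
qed

lemma dichotomy_weight_tendsto_0:
  fixes \<nu> \<alpha> t :: real
  assumes "\<nu> < \<alpha>"
  shows dichotomy_weight_tendsto_0_at_bot: "((\<lambda>a. exp (\<nu> * \<bar>a\<bar>) * exp (- \<alpha> * (t - a))) \<longlongrightarrow> 0) at_bot"
    and dichotomy_weight_tendsto_0_at_top: "((\<lambda>b. exp (\<nu> * \<bar>b\<bar>) * exp (\<alpha> * (t - b))) \<longlongrightarrow> 0) at_top"
proof -
  have "\<forall>\<^sub>F a in at_bot. exp ((\<alpha> - \<nu>) * a - \<alpha> * t) = exp (\<nu> * \<bar>a\<bar>) * exp (- \<alpha> * (t - a))"
    by (auto simp: eventually_at_bot_linorder mult_exp_exp algebra_simps intro!: exI[of _ 0])
  moreover have "((\<lambda>a. exp ((\<alpha> - \<nu>) * a - \<alpha> * t)) \<longlongrightarrow> 0) at_bot"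
    using assms by real_asymp
  ultimately show "((\<lambda>a. exp (\<nu> * \<bar>a\<bar>) * exp (- \<alpha> * (t - a))) \<longlongrightarrow> 0) at_bot"
    using tendsto_cong by fastforce
  have "\<forall>\<^sub>F b in at_top. exp ((\<nu> - \<alpha>) * b + \<alpha> * t) = exp (\<nu> * \<bar>b\<bar>) * exp (\<alpha> * (t - b))"
    by (auto simp: eventually_at_top_linorder mult_exp_exp algebra_simps intro!: exI[of _ 0])
  moreover have "((\<lambda>b. exp ((\<nu> - \<alpha>) * b + \<alpha> * t)) \<longlongrightarrow> 0) at_top"
    using assms by real_asymp
  ultimately show "((\<lambda>b. exp (\<nu> * \<bar>b\<bar>) * exp (\<alpha> * (t - b))) \<longlongrightarrow> 0) at_top"
    using tendsto_cong by fastforce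
qed

lemma continuous_on_evolution_comp:
  assumes "continuous_on {(t, s, x). s \<le> t} (\<lambda>(t, s, x). E t s x)" "continuous_on {b..a} y"
  shows "continuous_on {b..a} (\<lambda>\<tau>. E a \<tau> (y \<tau>))"
proof -
  have "continuous_on {b..a} (\<lambda>\<tau>. (\<lambda>(t, s, x). E t s x) (a, \<tau>, y \<tau>))"
    by (rule continuous_on_compose2[OF assms(1)]) (use assms(2) in \<open>auto intro!: continuous_intros\<close>)
  then show ?thesis by simp
qed

lemma global_solution_continuous:
  assumes S: "evolution_process S" and \<phi>: "global_solution S \<phi>"
  shows "continuous_on UNIV \<phi>"
proof -
  have Sc: "continuous_on {(t, s, x). s \<le> t} (\<lambda>(t, s, x). S t s x)"
    using S by (simp add: evolution_process_def)
  have "isCont \<phi> t" for t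
  proof -
    have "continuous_on {t-1..} (\<lambda>\<tau>. (\<lambda>(t, s, x). S t s x) (\<tau>, t-1, \<phi> (t-1)))"
      by (rule continuous_on_compose2[OF Sc]) (auto intro!: continuous_intros)
    then have "continuous_on {t-1..} (\<lambda>\<tau>. S \<tau> (t-1) (\<phi> (t-1)))" by simp
    moreover have "\<And>\<tau>. \<tau> \<in> {t-1..} \<Longrightarrow> S \<tau> (t-1) (\<phi> (t-1)) = \<phi> \<tau>"
      using \<phi> by (simp add: global_solution_def)
    ultimately have "continuous_on {t-1..} \<phi>" using continuous_on_cong by metis
    then show ?thesis by (rule continuous_on_interior) simp
  qed
  then show ?thesis by (simp add: continuous_on_eq_continuous_at)
qed

lemma continuous_on_interval_norm_bounded:
  fixes h :: "real \<Rightarrow> 'b::real_normed_vector"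
  assumes "continuous_on {s..t} h"
  obtains R where "R \<ge> 0" "\<And>\<tau>. s \<le> \<tau> \<Longrightarrow> \<tau> \<le> t \<Longrightarrow> norm (h \<tau>) \<le> R"
proof -
  have "bounded (h ` {s..t})"
    by (intro compact_imp_bounded compact_continuous_image assms compact_Icc)
  then obtain R where "\<forall>y\<in>h ` {s..t}. norm y \<le> R" by (auto simp: bounded_iff)
  then have "norm (h \<tau>) \<le> max R 0" if "s \<le> \<tau>" "\<tau> \<le> t" for \<tau>
    using that by (auto simp: le_max_iff_disj)
  then show ?thesis using that[of "max R 0"] by simp
qed

lemma linearisation_remainder_le_of_rho_less:
  assumes "rho f Df \<xi> \<nu> \<epsilon> < ereal c" "norm x \<le> \<epsilon>"
  shows "exp (\<nu> * \<bar>t\<bar>) * norm (f t (\<xi> t + x) - f t (\<xi> t) - Df t (\<xi> t) x) \<le> c * norm x"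
proof (cases "x = 0")
  case False
  have "ereal (exp (\<nu> * \<bar>t\<bar>) * norm (f t (\<xi> t + x) - f t (\<xi> t) - Df t (\<xi> t) x) / norm x)
        \<le> rho f Df \<xi> \<nu> \<epsilon>"
    unfolding rho_def by (rule SUP_upper2[of "(t, x)"]) (use False assms(2) in auto)
  also note assms(1)
  finally have "exp (\<nu> * \<bar>t\<bar>) * norm (f t (\<xi> t + x) - f t (\<xi> t) - Df t (\<xi> t) x) / norm x < c"
    by simp
  then show ?thesis using False by (simp add: divide_less_eq)
qed simp

locale linear_perturbation =
  fixes T L :: "real \<Rightarrow> real \<Rightarrow> 'a::banach \<Rightarrow>\<^sub>L 'a" and B :: "real \<Rightarrow> 'a \<Rightarrow>\<^sub>L 'a"
    and s0 t0 M :: real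
  assumes s0_le_t0: "s0 \<le> t0"
    and M_nonneg: "0 \<le> M"
    and T_le: "\<And>a b x. s0 \<le> b \<Longrightarrow> b \<le> a \<Longrightarrow> a \<le> t0 \<Longrightarrow> norm (T a b x) \<le> M * norm x"
    and L_le: "\<And>a b x. s0 \<le> b \<Longrightarrow> b \<le> a \<Longrightarrow> a \<le> t0 \<Longrightarrow> norm (L a b x) \<le> M * norm x"
    and B_le: "\<And>\<tau> y. s0 \<le> \<tau> \<Longrightarrow> \<tau> \<le> t0 \<Longrightarrow> norm (B \<tau> y) \<le> M * norm y"
    and L_trans: "\<And>a b c x. s0 \<le> c \<Longrightarrow> c \<le> b \<Longrightarrow> b \<le> a \<Longrightarrow> a \<le> t0 \<Longrightarrow> L a b (L b c x) = L a c x"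
    and L_refl: "\<And>a x. L a a x = x"
    and L_integrable: "\<And>a b y. s0 \<le> b \<Longrightarrow> b \<le> a \<Longrightarrow> a \<le> t0 \<Longrightarrow>
                  (\<lambda>\<tau>. T a \<tau> (B \<tau> (L \<tau> b y))) integrable_on {b..a}"
    and L_mild: "\<And>a b y. s0 \<le> b \<Longrightarrow> b \<le> a \<Longrightarrow> a \<le> t0 \<Longrightarrow>
                  L a b y = T a b y + integral {b..a} (\<lambda>\<tau>. T a \<tau> (B \<tau> (L \<tau> b y)))"
begin

lemma norm_T_B_le: "s0 \<le> \<sigma> \<Longrightarrow> \<sigma> \<le> a \<Longrightarrow> a \<le> t0 \<Longrightarrow> norm (T a \<sigma> (B \<sigma> z)) \<le> M\<^sup>2 * norm z"
proof -
  assume "s0 \<le> \<sigma>" "\<sigma> \<le> a" "a \<le> t0"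
  then have "norm (T a \<sigma> (B \<sigma> z)) \<le> M * norm (B \<sigma> z)" using T_le by auto
  also have "\<dots> \<le> M * (M * norm z)"
    using B_le \<open>s0 \<le> \<sigma>\<close> \<open>\<sigma> \<le> a\<close> \<open>a \<le> t0\<close> M_nonneg by (intro mult_left_mono) auto
  finally show ?thesis by (simp add: power2_eq_square mult.assoc)
qed

lemma norm_L_minus_T_le:
  assumes "s0 \<le> b" "b \<le> a" "a \<le> t0"
  shows "norm (L a b y - T a b y) \<le> M ^ 3 * norm y * (a - b)"
proof -
  have "L a b y - T a b y = integral {b..a} (\<lambda>\<sigma>. T a \<sigma> (B \<sigma> (L \<sigma> b y)))"
    using L_mild assms by simp
  also have "norm \<dots> \<le> M ^ 3 * norm y * (a - b)"
  proof (rule norm_integral_le_length)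
    fix \<sigma> assume "b \<le> \<sigma>" "\<sigma> \<le> a"
    then have "norm (T a \<sigma> (B \<sigma> (L \<sigma> b y))) \<le> M\<^sup>2 * norm (L \<sigma> b y)"
      using norm_T_B_le assms by auto
    also have "\<dots> \<le> M\<^sup>2 * (M * norm y)"
      using L_le \<open>b \<le> \<sigma>\<close> \<open>\<sigma> \<le> a\<close> assms by (intro mult_left_mono) auto
    finally show "norm (T a \<sigma> (B \<sigma> (L \<sigma> b y))) \<le> M ^ 3 * norm y"
      by (simp add: power2_eq_square power3_eq_cube mult.assoc)
  qed (use assms L_integrable in auto)
  finally show ?thesis .
qed

context
  fixes \<phi> g :: "real \<Rightarrow> 'a" and R :: real
  assumes \<phi>_le: "\<And>\<tau>. s0 \<le> \<tau> \<Longrightarrow> \<tau> \<le> t0 \<Longrightarrow> norm (\<phi> \<tau>) \<le> R"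
    and g_le: "\<And>\<tau>. s0 \<le> \<tau> \<Longrightarrow> \<tau> \<le> t0 \<Longrightarrow> norm (g \<tau>) \<le> R"
    and \<phi>_mild: "\<And>a b. s0 \<le> b \<Longrightarrow> b \<le> a \<Longrightarrow> a \<le> t0 \<Longrightarrow>
                  \<phi> a = T a b (\<phi> b) + integral {b..a} (\<lambda>\<tau>. T a \<tau> (B \<tau> (\<phi> \<tau>) + g \<tau>))"
    and T_g_integrable: "\<And>a b. s0 \<le> b \<Longrightarrow> b \<le> a \<Longrightarrow> a \<le> t0 \<Longrightarrow>
                  (\<lambda>\<tau>. T a \<tau> (g \<tau>)) integrable_on {b..a}"
    and T_B_\<phi>_integrable: "\<And>a b. s0 \<le> b \<Longrightarrow> b \<le> a \<Longrightarrow> a \<le> t0 \<Longrightarrow>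
                  (\<lambda>\<tau>. T a \<tau> (B \<tau> (\<phi> \<tau>))) integrable_on {b..a}"
    and L_g_integrable: "\<And>a b. s0 \<le> b \<Longrightarrow> b \<le> a \<Longrightarrow> a \<le> t0 \<Longrightarrow>
                  (\<lambda>\<tau>. L a \<tau> (g \<tau>)) integrable_on {b..a}"
begin

lemma R_nonneg: "0 \<le> R"
  using \<phi>_le[of s0] s0_le_t0 norm_ge_zero order_trans by blast

lemma solution_minus_propagated_le:
  obtains C where "0 \<le> C"
    "\<And>b \<tau>. s0 \<le> b \<Longrightarrow> b \<le> \<tau> \<Longrightarrow> \<tau> \<le> t0 \<Longrightarrow> norm (\<phi> \<tau> - L \<tau> b (\<phi> b)) \<le> C * (\<tau> - b)"
proof
  show "0 \<le> M * (M * R + R) + M ^ 3 * R"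
    using M_nonneg R_nonneg by simp
  fix b \<tau> assume b\<tau>: "s0 \<le> b" "b \<le> \<tau>" "\<tau> \<le> t0"
  have "\<phi> \<tau> - L \<tau> b (\<phi> b) = integral {b..\<tau>} (\<lambda>\<sigma>. T \<tau> \<sigma> (B \<sigma> (\<phi> \<sigma>) + g \<sigma>))
        - integral {b..\<tau>} (\<lambda>\<sigma>. T \<tau> \<sigma> (B \<sigma> (L \<sigma> b (\<phi> b))))"
    using \<phi>_mild[of b \<tau>] L_mild[of b \<tau> "\<phi> b"] b\<tau> by simp
  moreover have "norm (integral {b..\<tau>} (\<lambda>\<sigma>. T \<tau> \<sigma> (B \<sigma> (\<phi> \<sigma>) + g \<sigma>))) \<le> M * (M * R + R) * (\<tau> - b)"
  proof (rule norm_integral_le_length)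
    show "(\<lambda>\<sigma>. T \<tau> \<sigma> (B \<sigma> (\<phi> \<sigma>) + g \<sigma>)) integrable_on {b..\<tau>}"
      using integrable_add[OF T_B_\<phi>_integrable T_g_integrable] b\<tau> by (simp add: blinfun.add_right)
    fix \<sigma> assume \<sigma>: "b \<le> \<sigma>" "\<sigma> \<le> \<tau>"
    then have "norm (B \<sigma> (\<phi> \<sigma>) + g \<sigma>) \<le> M * R + R"
      using B_le[of \<sigma> "\<phi> \<sigma>"] \<phi>_le[of \<sigma>] g_le[of \<sigma>] M_nonneg b\<tau>
      by (smt (verit, best) mult_left_mono norm_triangle_ineq)
    then show "norm (T \<tau> \<sigma> (B \<sigma> (\<phi> \<sigma>) + g \<sigma>)) \<le> M * (M * R + R)"
      using T_le[of \<sigma> \<tau>] \<sigma> b\<tau> M_nonneg by (meson order_trans mult_left_mono)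
  qed (use b\<tau> in auto)
  moreover have "norm (integral {b..\<tau>} (\<lambda>\<sigma>. T \<tau> \<sigma> (B \<sigma> (L \<sigma> b (\<phi> b))))) \<le> M ^ 3 * R * (\<tau> - b)"
  proof (rule norm_integral_le_length)
    fix \<sigma> assume \<sigma>: "b \<le> \<sigma>" "\<sigma> \<le> \<tau>"
    have "norm (T \<tau> \<sigma> (B \<sigma> (L \<sigma> b (\<phi> b)))) \<le> M\<^sup>2 * norm (L \<sigma> b (\<phi> b))"
      using norm_T_B_le \<sigma> b\<tau> by auto
    also have "\<dots> \<le> M\<^sup>2 * (M * R)"
      using L_le[of b \<sigma> "\<phi> b"] \<phi>_le[of b] \<sigma> b\<tau> M_nonneg
      by (intro mult_left_mono) (auto intro: order_trans mult_left_mono)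
    finally show "norm (T \<tau> \<sigma> (B \<sigma> (L \<sigma> b (\<phi> b)))) \<le> M ^ 3 * R"
      by (simp add: power2_eq_square power3_eq_cube mult.assoc)
  qed (use b\<tau> L_integrable in auto)
  ultimately show "norm (\<phi> \<tau> - L \<tau> b (\<phi> b)) \<le> (M * (M * R + R) + M ^ 3 * R) * (\<tau> - b)"
    by (smt (verit) distrib_right norm_triangle_ineq4)
qed

lemma local_defect_le:
  obtains K where "0 \<le> K"
    "\<And>a b. s0 \<le> b \<Longrightarrow> b \<le> a \<Longrightarrow> a \<le> t0 \<Longrightarrow>
       norm (\<phi> a - L a b (\<phi> b) - integral {b..a} (\<lambda>\<tau>. L a \<tau> (g \<tau>))) \<le> K * (a - b)\<^sup>2"
proof -
  obtain C where C: "0 \<le> C"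
    "\<And>b \<tau>. s0 \<le> b \<Longrightarrow> b \<le> \<tau> \<Longrightarrow> \<tau> \<le> t0 \<Longrightarrow> norm (\<phi> \<tau> - L \<tau> b (\<phi> b)) \<le> C * (\<tau> - b)"
    using solution_minus_propagated_le by blast
  show ?thesis
  proof
    show "0 \<le> M\<^sup>2 * C + M ^ 3 * R" using M_nonneg R_nonneg C(1) by simp
    fix a b assume ab: "s0 \<le> b" "b \<le> a" "a \<le> t0"
    have iA: "(\<lambda>\<tau>. T a \<tau> (B \<tau> (\<phi> \<tau>))) integrable_on {b..a}"
      and iB: "(\<lambda>\<tau>. T a \<tau> (g \<tau>)) integrable_on {b..a}"
      and iC: "(\<lambda>\<tau>. T a \<tau> (B \<tau> (L \<tau> b (\<phi> b)))) integrable_on {b..a}"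
      and iD: "(\<lambda>\<tau>. L a \<tau> (g \<tau>)) integrable_on {b..a}"
      using T_B_\<phi>_integrable T_g_integrable L_integrable L_g_integrable ab by auto
    have "\<phi> a - L a b (\<phi> b) - integral {b..a} (\<lambda>\<tau>. L a \<tau> (g \<tau>)) =
        integral {b..a} (\<lambda>\<tau>. T a \<tau> (B \<tau> (\<phi> \<tau> - L \<tau> b (\<phi> b))))
        - integral {b..a} (\<lambda>\<tau>. L a \<tau> (g \<tau>) - T a \<tau> (g \<tau>))"
      using \<phi>_mild[of b a] L_mild[of b a "\<phi> b"] ab
        integral_add[OF iA iB] integral_diff[OF iA iC] integral_diff[OF iD iB]
      by (simp add: blinfun.add_right blinfun.diff_right algebra_simps)
    moreover have "norm (integral {b..a} (\<lambda>\<tau>. T a \<tau> (B \<tau> (\<phi> \<tau> - L \<tau> b (\<phi> b)))))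
        \<le> M\<^sup>2 * (C * (a - b)) * (a - b)"
    proof (rule norm_integral_le_length)
      show "(\<lambda>\<tau>. T a \<tau> (B \<tau> (\<phi> \<tau> - L \<tau> b (\<phi> b)))) integrable_on {b..a}"
        using integrable_diff[OF iA iC] by (simp add: blinfun.diff_right)
      fix \<tau> assume \<tau>: "b \<le> \<tau>" "\<tau> \<le> a"
      have "norm (T a \<tau> (B \<tau> (\<phi> \<tau> - L \<tau> b (\<phi> b)))) \<le> M\<^sup>2 * norm (\<phi> \<tau> - L \<tau> b (\<phi> b))"
        using norm_T_B_le ab \<tau> by auto
      also have "\<dots> \<le> M\<^sup>2 * (C * (a - b))"
        using C(2)[of b \<tau>] C(1) ab \<tau> mult_left_mono[of "\<tau> - b" "a - b" C]
        by (intro mult_left_mono) auto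
      finally show "norm (T a \<tau> (B \<tau> (\<phi> \<tau> - L \<tau> b (\<phi> b)))) \<le> M\<^sup>2 * (C * (a - b))" .
    qed (use ab in auto)
    moreover have "norm (integral {b..a} (\<lambda>\<tau>. L a \<tau> (g \<tau>) - T a \<tau> (g \<tau>))) \<le> M ^ 3 * R * (a - b) * (a - b)"
    proof (rule norm_integral_le_length)
      show "(\<lambda>\<tau>. L a \<tau> (g \<tau>) - T a \<tau> (g \<tau>)) integrable_on {b..a}"
        using integrable_diff[OF iD iB] by simp
      fix \<tau> assume \<tau>: "b \<le> \<tau>" "\<tau> \<le> a"
      have "norm (L a \<tau> (g \<tau>) - T a \<tau> (g \<tau>)) \<le> M ^ 3 * norm (g \<tau>) * (a - \<tau>)"
        using norm_L_minus_T_le ab \<tau> by auto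
      also have "\<dots> \<le> M ^ 3 * R * (a - b)"
        using g_le[of \<tau>] ab \<tau> M_nonneg R_nonneg by (intro mult_mono mult_left_mono) auto
      finally show "norm (L a \<tau> (g \<tau>) - T a \<tau> (g \<tau>)) \<le> M ^ 3 * R * (a - b)" .
    qed (use ab in auto)
    ultimately show "norm (\<phi> a - L a b (\<phi> b) - integral {b..a} (\<lambda>\<tau>. L a \<tau> (g \<tau>)))
        \<le> (M\<^sup>2 * C + M ^ 3 * R) * (a - b)\<^sup>2"
      by (smt (verit) norm_triangle_ineq4 power2_eq_square distrib_right mult.assoc)
  qed
qed

\<comment> \<open>Transporting the local defect to time t0 by L(t0,\<cdot>) gives a function of the left
  endpoint whose increments are quadratic, hence which is constant.\<close>
theorem variation_of_constants:
  "\<phi> t0 = L t0 s0 (\<phi> s0) + integral {s0..t0} (\<lambda>\<tau>. L t0 \<tau> (g \<tau>))"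
proof -
  obtain K where K: "0 \<le> K"
    "\<And>a b. s0 \<le> b \<Longrightarrow> b \<le> a \<Longrightarrow> a \<le> t0 \<Longrightarrow>
       norm (\<phi> a - L a b (\<phi> b) - integral {b..a} (\<lambda>\<tau>. L a \<tau> (g \<tau>))) \<le> K * (a - b)\<^sup>2"
    using local_defect_le by blast
  define \<Psi> where "\<Psi> x = L t0 x (\<phi> x) - integral {s0..x} (\<lambda>\<tau>. L t0 \<tau> (g \<tau>))" for x
  have "norm (\<Psi> a - \<Psi> b) \<le> (M * K) * (a - b)\<^sup>2" if ab: "s0 \<le> b" "b \<le> a" "a \<le> t0" for a b
  proof -
    have i0: "(\<lambda>\<tau>. L t0 \<tau> (g \<tau>)) integrable_on {s0..a}"
      using integrable_subinterval_real[OF L_g_integrable[OF order_refl s0_le_t0 order_refl]] ab by auto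
    have comb: "integral {s0..b} (\<lambda>\<tau>. L t0 \<tau> (g \<tau>)) + integral {b..a} (\<lambda>\<tau>. L t0 \<tau> (g \<tau>))
        = integral {s0..a} (\<lambda>\<tau>. L t0 \<tau> (g \<tau>))"
      by (rule Henstock_Kurzweil_Integration.integral_combine[OF ab(1,2) i0])
    have "integral {b..a} (\<lambda>\<tau>. L t0 a (L a \<tau> (g \<tau>))) = L t0 a (integral {b..a} (\<lambda>\<tau>. L a \<tau> (g \<tau>)))"
      using integral_linear[OF L_g_integrable[OF ab] blinfun.bounded_linear_right[of "L t0 a"]]
      by (simp add: o_def)
    moreover have "integral {b..a} (\<lambda>\<tau>. L t0 a (L a \<tau> (g \<tau>))) = integral {b..a} (\<lambda>\<tau>. L t0 \<tau> (g \<tau>))"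
      by (rule integral_cong) (use L_trans ab in auto)
    ultimately have "\<Psi> a - \<Psi> b = L t0 a (\<phi> a - L a b (\<phi> b) - integral {b..a} (\<lambda>\<tau>. L a \<tau> (g \<tau>)))"
      unfolding \<Psi>_def blinfun.diff_right comb[symmetric]
      using L_trans[of b a t0 "\<phi> b"] ab by simp
    also have "norm \<dots> \<le> M * norm (\<phi> a - L a b (\<phi> b) - integral {b..a} (\<lambda>\<tau>. L a \<tau> (g \<tau>)))"
      using L_le ab by auto
    also have "\<dots> \<le> M * (K * (a - b)\<^sup>2)"
      using K(2)[OF ab] M_nonneg by (intro mult_left_mono) auto
    finally show ?thesis by (simp add: mult.assoc)
  qed
  then have "\<Psi> t0 = \<Psi> s0"
    by (rule endpoints_eq_of_quadratic_increments[OF s0_le_t0])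
  then show ?thesis unfolding \<Psi>_def using L_refl by (simp add: algebra_simps)
qed

end

end


locale mild_linearisation =
  fixes T :: "real \<Rightarrow> real \<Rightarrow> 'a::banach \<Rightarrow>\<^sub>L 'a"
    and f :: "real \<Rightarrow> 'a \<Rightarrow> 'a"
    and Df :: "real \<Rightarrow> 'a \<Rightarrow> 'a \<Rightarrow>\<^sub>L 'a"
    and S :: "real \<Rightarrow> real \<Rightarrow> 'a \<Rightarrow> 'a"
    and \<xi> :: "real \<Rightarrow> 'a"
    and L :: "real \<Rightarrow> real \<Rightarrow> 'a \<Rightarrow>\<^sub>L 'a"
  assumes T_process: "linear_evolution_process T"
    and f_cont: "continuous_on UNIV (\<lambda>(t, x). f t x)"
    and Df_cont: "continuous_on UNIV (\<lambda>(t, x). Df t x)"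
    and S_process: "evolution_process S"
    and S_mild: "\<And>t s y. s \<le> t \<Longrightarrow>
                   S t s y = T t s y + integral {s..t} (\<lambda>\<tau>. T t \<tau> (f \<tau> (S \<tau> s y)))"
    and \<xi>_solution: "global_solution S \<xi>"
    and L_process: "linear_evolution_process L"
    and L_integrable: "\<And>t s x. s \<le> t \<Longrightarrow> (\<lambda>\<tau>. T t \<tau> (Df \<tau> (\<xi> \<tau>) (L \<tau> s x))) integrable_on {s..t}"
    and L_mild: "\<And>t s x. s \<le> t \<Longrightarrow>
                 L t s x = T t s x + integral {s..t} (\<lambda>\<tau>. T t \<tau> (Df \<tau> (\<xi> \<tau>) (L \<tau> s x)))"
begin

definition nonlinear_part :: "(real \<Rightarrow> 'a) \<Rightarrow> real \<Rightarrow> 'a" where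
  "nonlinear_part \<phi> \<tau> = f \<tau> (\<phi> \<tau>) - Df \<tau> (\<xi> \<tau>) (\<phi> \<tau>)"

definition voc_solution :: "(real \<Rightarrow> 'a) \<Rightarrow> (real \<Rightarrow> 'a) \<Rightarrow> bool" where
  "voc_solution u k \<longleftrightarrow> (\<forall>s t. s \<le> t \<longrightarrow> (\<lambda>\<tau>. L t \<tau> (k \<tau>)) integrable_on {s..t}
        \<and> u t = L t s (u s) + integral {s..t} (\<lambda>\<tau>. L t \<tau> (k \<tau>)))"

lemma T_cont: "continuous_on {(t, s, x). s \<le> t} (\<lambda>(t, s, x). blinfun_apply (T t s) x)"
  and L_cont: "continuous_on {(t, s, x). s \<le> t} (\<lambda>(t, s, x). blinfun_apply (L t s) x)"
  and L_refl: "L t t x = x"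
  and L_trans: "s \<le> \<tau> \<Longrightarrow> \<tau> \<le> t \<Longrightarrow> L t \<tau> (L \<tau> s x) = L t s x"
  using T_process L_process by (simp_all add: linear_evolution_process_def evolution_process_def)

lemma Df_\<xi>_cont: "continuous_on A (\<lambda>\<tau>. Df \<tau> (\<xi> \<tau>))"
proof -
  have "continuous_on UNIV (\<lambda>\<tau>. (\<lambda>(t, x). Df t x) (\<tau>, \<xi> \<tau>))"
    by (rule continuous_on_compose2[OF Df_cont])
       (auto intro!: continuous_intros global_solution_continuous[OF S_process \<xi>_solution])
  then show ?thesis by (auto intro: continuous_on_subset)
qed

lemma f_comp_cont: "continuous_on A y \<Longrightarrow> continuous_on A (\<lambda>\<tau>. f \<tau> (y \<tau>))"
proof -
  assume y: "continuous_on A y"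
  have "continuous_on A (\<lambda>\<tau>. (\<lambda>(t, x). f t x) (\<tau>, y \<tau>))"
    by (rule continuous_on_compose2[OF f_cont]) (auto intro!: continuous_intros y)
  then show ?thesis by simp
qed

lemma nonlinear_part_cont: "continuous_on UNIV \<phi> \<Longrightarrow> continuous_on A (nonlinear_part \<phi>)"
  unfolding nonlinear_part_def
  by (intro continuous_intros f_comp_cont Df_\<xi>_cont) (auto intro: continuous_on_subset)

lemma voc_solution_of_global_solution:
  assumes \<phi>: "global_solution S \<phi>"
  shows "voc_solution \<phi> (nonlinear_part \<phi>)"
  unfolding voc_solution_def
proof (intro allI impI conjI)
  fix s t :: real assume st: "s \<le> t"
  let ?g = "nonlinear_part \<phi>"
  have \<phi>c: "continuous_on A \<phi>" for A
    using global_solution_continuous[OF S_process \<phi>] by (rule continuous_on_subset) simp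
  have gc: "continuous_on A ?g" for A
    using nonlinear_part_cont[OF \<phi>c] .
  have T_comp: "continuous_on {b..a} y \<Longrightarrow> continuous_on {b..a} (\<lambda>\<tau>. T a \<tau> (y \<tau>))" for a b y
    by (rule continuous_on_evolution_comp[OF T_cont])
  have L_comp: "continuous_on {b..a} y \<Longrightarrow> continuous_on {b..a} (\<lambda>\<tau>. L a \<tau> (y \<tau>))" for a b y
    by (rule continuous_on_evolution_comp[OF L_cont])
  show "(\<lambda>\<tau>. L t \<tau> (?g \<tau>)) integrable_on {s..t}"
    by (intro integrable_continuous_real L_comp gc)
  obtain M1 where M1: "M1 \<ge> 0" "\<And>a b x. s \<le> b \<Longrightarrow> b \<le> a \<Longrightarrow> a \<le> t \<Longrightarrow> norm (T a b x) \<le> M1 * norm x"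
    using evolution_norm_bounded_on_interval[OF T_cont] by blast
  obtain M2 where M2: "M2 \<ge> 0" "\<And>a b x. s \<le> b \<Longrightarrow> b \<le> a \<Longrightarrow> a \<le> t \<Longrightarrow> norm (L a b x) \<le> M2 * norm x"
    using evolution_norm_bounded_on_interval[OF L_cont] by blast
  obtain M3 where M3: "M3 \<ge> 0" "\<And>\<tau>. s \<le> \<tau> \<Longrightarrow> \<tau> \<le> t \<Longrightarrow> norm (Df \<tau> (\<xi> \<tau>)) \<le> M3"
    using continuous_on_interval_norm_bounded[OF Df_\<xi>_cont] by blast
  obtain R1 where R1: "R1 \<ge> 0" "\<And>\<tau>. s \<le> \<tau> \<Longrightarrow> \<tau> \<le> t \<Longrightarrow> norm (\<phi> \<tau>) \<le> R1"
    using continuous_on_interval_norm_bounded[OF \<phi>c] by blast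
  obtain R2 where R2: "R2 \<ge> 0" "\<And>\<tau>. s \<le> \<tau> \<Longrightarrow> \<tau> \<le> t \<Longrightarrow> norm (?g \<tau>) \<le> R2"
    using continuous_on_interval_norm_bounded[OF gc] by blast
  define M where "M = max M1 (max M2 M3)"
  interpret linear_perturbation T L "\<lambda>\<tau>. Df \<tau> (\<xi> \<tau>)" s t M
  proof
    fix a b x assume ab: "s \<le> b" "b \<le> a" "a \<le> t"
    show "norm (T a b x) \<le> M * norm x"
      using M1(2)[OF ab, of x] by (smt (verit) M_def mult_right_mono norm_ge_zero)
    show "norm (L a b x) \<le> M * norm x"
      using M2(2)[OF ab, of x] by (smt (verit) M_def mult_right_mono norm_ge_zero)
  next
    fix \<tau> y assume "s \<le> \<tau>" "\<tau> \<le> t"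
    then show "norm (Df \<tau> (\<xi> \<tau>) y) \<le> M * norm y"
      using norm_blinfun[of "Df \<tau> (\<xi> \<tau>)" y] M3(2)[of \<tau>]
      by (smt (verit) M_def mult_right_mono norm_ge_zero)
  qed (use st M1 L_refl L_trans L_integrable L_mild in \<open>auto simp: M_def\<close>)
  show "\<phi> t = L t s (\<phi> s) + integral {s..t} (\<lambda>\<tau>. L t \<tau> (?g \<tau>))"
  proof (rule variation_of_constants[where R = "max R1 R2"])
    fix a b assume ab: "s \<le> b" "b \<le> a" "a \<le> t"
    have "\<phi> a = T a b (\<phi> b) + integral {b..a} (\<lambda>\<tau>. T a \<tau> (f \<tau> (S \<tau> b (\<phi> b))))"
      using \<phi> S_mild ab by (auto simp: global_solution_def)
    also have "integral {b..a} (\<lambda>\<tau>. T a \<tau> (f \<tau> (S \<tau> b (\<phi> b)))) =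
               integral {b..a} (\<lambda>\<tau>. T a \<tau> (Df \<tau> (\<xi> \<tau>) (\<phi> \<tau>) + ?g \<tau>))"
      by (rule integral_cong) (use \<phi> in \<open>auto simp: global_solution_def nonlinear_part_def\<close>)
    finally show "\<phi> a = T a b (\<phi> b) + integral {b..a} (\<lambda>\<tau>. T a \<tau> (Df \<tau> (\<xi> \<tau>) (\<phi> \<tau>) + ?g \<tau>))" .
    show "(\<lambda>\<tau>. T a \<tau> (?g \<tau>)) integrable_on {b..a}"
      by (intro integrable_continuous_real T_comp gc)
    show "(\<lambda>\<tau>. T a \<tau> (Df \<tau> (\<xi> \<tau>) (\<phi> \<tau>))) integrable_on {b..a}"
      by (intro integrable_continuous_real T_comp continuous_intros Df_\<xi>_cont \<phi>c)
    show "(\<lambda>\<tau>. L a \<tau> (?g \<tau>)) integrable_on {b..a}"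
      by (intro integrable_continuous_real L_comp gc)
  qed (use R1 R2 in \<open>auto simp: le_max_iff_disj\<close>)
qed

lemma voc_solution_diff:
  assumes "voc_solution u1 k1" "voc_solution u2 k2"
  shows "voc_solution (\<lambda>\<tau>. u1 \<tau> - u2 \<tau>) (\<lambda>\<tau>. k1 \<tau> - k2 \<tau>)"
  unfolding voc_solution_def
proof (intro allI impI conjI)
  fix s t :: real assume st: "s \<le> t"
  have i1: "(\<lambda>\<tau>. L t \<tau> (k1 \<tau>)) integrable_on {s..t}"
    and e1: "u1 t = L t s (u1 s) + integral {s..t} (\<lambda>\<tau>. L t \<tau> (k1 \<tau>))"
    and i2: "(\<lambda>\<tau>. L t \<tau> (k2 \<tau>)) integrable_on {s..t}"
    and e2: "u2 t = L t s (u2 s) + integral {s..t} (\<lambda>\<tau>. L t \<tau> (k2 \<tau>))"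
    using assms st unfolding voc_solution_def by auto
  show "(\<lambda>\<tau>. L t \<tau> (k1 \<tau> - k2 \<tau>)) integrable_on {s..t}"
    using integrable_diff[OF i1 i2] by (simp add: blinfun.diff_right)
  show "u1 t - u2 t = L t s (u1 s - u2 s) + integral {s..t} (\<lambda>\<tau>. L t \<tau> (k1 \<tau> - k2 \<tau>))"
    using e1 e2 integral_diff[OF i1 i2] by (simp add: blinfun.diff_right algebra_simps)
qed

end

locale hyperbolic_linearisation = mild_linearisation T f Df S \<xi> L
  for T :: "real \<Rightarrow> real \<Rightarrow> 'a::banach \<Rightarrow>\<^sub>L 'a"
    and f :: "real \<Rightarrow> 'a \<Rightarrow> 'a"
    and Df :: "real \<Rightarrow> 'a \<Rightarrow> 'a \<Rightarrow>\<^sub>L 'a"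
    and S :: "real \<Rightarrow> real \<Rightarrow> 'a \<Rightarrow> 'a"
    and \<xi> :: "real \<Rightarrow> 'a"
    and L :: "real \<Rightarrow> real \<Rightarrow> 'a \<Rightarrow>\<^sub>L 'a" +
  fixes Q :: "real \<Rightarrow> 'a \<Rightarrow>\<^sub>L 'a" and D \<nu> \<alpha> :: real
  assumes dichotomy: "nonuniform_exp_dichotomy L Q D \<nu> \<alpha>"
    and \<nu>_less_\<alpha>: "\<nu> < \<alpha>"
begin

lemma D_ge_1: "1 \<le> D" and \<alpha>_pos: "0 < \<alpha>"
  and Q_commute: "s \<le> t \<Longrightarrow> Q t (L t s x) = L t s (Q s x)"
  and L_bij_betw: "s \<le> t \<Longrightarrow>
    bij_betw (blinfun_apply (L t s)) (range (blinfun_apply (Q s))) (range (blinfun_apply (Q t)))"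
  and stable_le: "s \<le> t \<Longrightarrow>
    norm (L t s (x - Q s x)) \<le> D * exp (\<nu> * \<bar>s\<bar>) * exp (- \<alpha> * (t - s)) * norm x"
  and unstable_le: "t < s \<Longrightarrow>
    norm (back_op L Q t s (Q s x)) \<le> D * exp (\<nu> * \<bar>s\<bar>) * exp (\<alpha> * (t - s)) * norm x"
  using dichotomy by (auto simp: nonuniform_exp_dichotomy_def simp flip: blinfun_apply_blinfun_compose)

lemma back_op_L: "t \<le> s \<Longrightarrow> z \<in> range (Q t) \<Longrightarrow> back_op L Q t s (L s t z) = z"
  unfolding back_op_def using L_bij_betw[of t s] by (simp add: bij_betw_def the_inv_into_f_f)

lemma L_back_op: "t \<le> s \<Longrightarrow> y \<in> range (Q s) \<Longrightarrow> L s t (back_op L Q t s y) = y"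
  unfolding back_op_def using L_bij_betw[of t s] by (simp add: bij_betw_def f_the_inv_into_f)

lemma back_op_in_range: "t \<le> s \<Longrightarrow> y \<in> range (Q s) \<Longrightarrow> back_op L Q t s y \<in> range (Q t)"
  unfolding back_op_def using L_bij_betw[of t s] by (auto simp: bij_betw_def intro!: the_inv_into_into)

lemma back_op_refl: "back_op L Q t t (Q t x) = Q t x"
  using back_op_L[of t t "Q t x"] by (simp add: L_refl)

lemma back_op_L_trans:
  assumes "t \<le> \<tau>" "\<tau> \<le> s"
  shows "back_op L Q t s (L s \<tau> (Q \<tau> y)) = back_op L Q t \<tau> (Q \<tau> y)"
proof -
  let ?z = "back_op L Q t \<tau> (Q \<tau> y)"
  have z: "?z \<in> range (Q t)" "L \<tau> t ?z = Q \<tau> y"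
    using back_op_in_range L_back_op assms by auto
  have "L s t ?z = L s \<tau> (Q \<tau> y)" using L_trans[of t \<tau> s ?z] z assms by simp
  then show ?thesis using back_op_L[of t s ?z] z assms by simp
qed

lemma linear_unstable_part:
  assumes ts: "t \<le> s"
  shows "linear (\<lambda>x. back_op L Q t s (Q s x))"
proof
  fix x y
  let ?u = "back_op L Q t s (Q s x)" and ?v = "back_op L Q t s (Q s y)"
  have "?u \<in> range (Q t)" "?v \<in> range (Q t)" "L s t ?u = Q s x" "L s t ?v = Q s y"
    using back_op_in_range L_back_op ts by auto
  moreover from this have "?u + ?v \<in> range (Q t)"
    by (auto simp: blinfun.add_right[symmetric])
  ultimately show "back_op L Q t s (Q s (x + y)) = ?u + ?v"
    using back_op_L[OF ts] by (metis blinfun.add_right)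
next
  fix c x
  let ?u = "back_op L Q t s (Q s x)"
  have "?u \<in> range (Q t)" "L s t ?u = Q s x"
    using back_op_in_range L_back_op ts by auto
  moreover from this have "c *\<^sub>R ?u \<in> range (Q t)"
    by (auto simp: blinfun.scaleR_right[symmetric])
  ultimately show "back_op L Q t s (Q s (c *\<^sub>R x)) = c *\<^sub>R ?u"
    using back_op_L[OF ts] by (metis blinfun.scaleR_right)
qed

lemma bounded_linear_unstable_part:
  assumes "t < s"
  shows "bounded_linear (\<lambda>x. back_op L Q t s (Q s x))"
proof -
  interpret linear "\<lambda>x. back_op L Q t s (Q s x)"
    using linear_unstable_part assms by simp
  show ?thesis
    by unfold_locales (use unstable_le[OF assms] in \<open>auto simp: mult.commute[of "norm _"]\<close>)
qed

lemma voc_stable_has_integral: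
  assumes V: "voc_solution u k" and at: "a \<le> t"
  shows "((\<lambda>\<tau>. L t \<tau> (k \<tau> - Q \<tau> (k \<tau>))) has_integral
            (u t - Q t (u t) - L t a (u a - Q a (u a)))) {a..t}"
proof -
  define I where "I = integral {a..t} (\<lambda>\<tau>. L t \<tau> (k \<tau>))"
  have hi: "((\<lambda>\<tau>. L t \<tau> (k \<tau>)) has_integral I) {a..t}" and e: "u t = L t a (u a) + I"
    using V at unfolding voc_solution_def I_def by auto
  have "((\<lambda>\<tau>. Q t (L t \<tau> (k \<tau>))) has_integral Q t I) {a..t}"
    using has_integral_linear[OF hi blinfun.bounded_linear_right[of "Q t"]] by (simp add: o_def)
  then have "((\<lambda>\<tau>. L t \<tau> (Q \<tau> (k \<tau>))) has_integral Q t I) {a..t}"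
    by (rule has_integral_spike_finite[of "{}", rotated 2]) (auto simp: Q_commute)
  from has_integral_diff[OF hi this] show ?thesis
    using e Q_commute[OF at] by (simp add: blinfun.diff_right blinfun.add_right algebra_simps)
qed

lemma voc_unstable_has_integral:
  assumes V: "voc_solution u k" and tb: "t < b"
  shows "((\<lambda>\<tau>. back_op L Q t \<tau> (Q \<tau> (k \<tau>))) has_integral
            (back_op L Q t b (Q b (u b)) - Q t (u t))) {t..b}"
proof -
  define I where "I = integral {t..b} (\<lambda>\<tau>. L b \<tau> (k \<tau>))"
  have hi: "((\<lambda>\<tau>. L b \<tau> (k \<tau>)) has_integral I) {t..b}" and e: "u b = L b t (u t) + I"
    using V tb unfolding voc_solution_def I_def by auto
  let ?V = "\<lambda>x. back_op L Q t b (Q b x)"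
  have "((\<lambda>\<tau>. ?V (L b \<tau> (k \<tau>))) has_integral ?V I) {t..b}"
    using has_integral_linear[OF hi bounded_linear_unstable_part[OF tb]] by (simp add: o_def)
  then have "((\<lambda>\<tau>. back_op L Q t \<tau> (Q \<tau> (k \<tau>))) has_integral ?V I) {t..b}"
    by (rule has_integral_spike_finite[of "{}", rotated 2]) (auto simp: Q_commute back_op_L_trans)
  moreover have "?V I = ?V (u b) - ?V (L b t (u t))"
    using e linear_diff[OF linear_unstable_part, of t b "u b" "L b t (u t)"] tb by simp
  moreover have "?V (L b t (u t)) = Q t (u t)"
    using Q_commute[of t b "u t"] back_op_L[of t b "Q t (u t)"] tb by auto
  ultimately show ?thesis by simp
qed

lemma stable_boundary_tendsto_0:
  assumes "\<And>\<tau>. norm (u \<tau>) \<le> \<Phi>"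
  shows "((\<lambda>a. L t a (u a - Q a (u a))) \<longlongrightarrow> 0) at_bot"
proof (rule Lim_null_comparison)
  show "((\<lambda>a. D * \<Phi> * (exp (\<nu> * \<bar>a\<bar>) * exp (- \<alpha> * (t - a)))) \<longlongrightarrow> 0) at_bot"
    using tendsto_mult_left[OF dichotomy_weight_tendsto_0_at_bot[OF \<nu>_less_\<alpha>], of "D * \<Phi>" t]
    by simp
  have "norm (L t a (u a - Q a (u a))) \<le> D * \<Phi> * (exp (\<nu> * \<bar>a\<bar>) * exp (- \<alpha> * (t - a)))"
    if "a \<le> t" for a
    using stable_le[OF that, of "u a"] assms[of a] D_ge_1
    by (smt (verit, best) exp_gt_zero mult.commute mult.left_commute mult_left_mono zero_le_mult_iff)
  then show "\<forall>\<^sub>F a in at_bot. norm (L t a (u a - Q a (u a)))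
      \<le> D * \<Phi> * (exp (\<nu> * \<bar>a\<bar>) * exp (- \<alpha> * (t - a)))"
    by (auto simp: eventually_at_bot_linorder intro!: exI[of _ t])
qed

lemma unstable_boundary_tendsto_0:
  assumes "\<And>\<tau>. norm (u \<tau>) \<le> \<Phi>"
  shows "((\<lambda>b. back_op L Q t b (Q b (u b))) \<longlongrightarrow> 0) at_top"
proof (rule Lim_null_comparison)
  show "((\<lambda>b. D * \<Phi> * (exp (\<nu> * \<bar>b\<bar>) * exp (\<alpha> * (t - b)))) \<longlongrightarrow> 0) at_top"
    using tendsto_mult_left[OF dichotomy_weight_tendsto_0_at_top[OF \<nu>_less_\<alpha>], of "D * \<Phi>" t]
    by simp
  have "norm (back_op L Q t b (Q b (u b))) \<le> D * \<Phi> * (exp (\<nu> * \<bar>b\<bar>) * exp (\<alpha> * (t - b)))"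
    if "t < b" for b
    using unstable_le[OF that, of "u b"] assms[of b] D_ge_1
    by (smt (verit, best) exp_gt_zero mult.commute mult.left_commute mult_left_mono zero_le_mult_iff)
  then show "\<forall>\<^sub>F b in at_top. norm (back_op L Q t b (Q b (u b)))
      \<le> D * \<Phi> * (exp (\<nu> * \<bar>b\<bar>) * exp (\<alpha> * (t - b)))"
    by (auto simp: eventually_at_top_linorder intro!: exI[of _ "t + 1"])
qed

theorem green_representation:
  assumes V: "voc_solution u k" and bd: "\<And>\<tau>. norm (u \<tau>) \<le> \<Phi>"
  shows "((\<lambda>\<tau>. green L Q t \<tau> (k \<tau>)) has_integral u t) UNIV"
proof -
  have "((\<lambda>\<tau>. green L Q t \<tau> (k \<tau>)) has_integral ((u t - Q t (u t)) + Q t (u t))) UNIV"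
  proof (rule has_integral_UNIV_of_halflines[OF _ stable_boundary_tendsto_0[OF bd]
        _ unstable_boundary_tendsto_0[OF bd]])
    fix a assume "a \<le> t"
    show "((\<lambda>\<tau>. green L Q t \<tau> (k \<tau>)) has_integral (u t - Q t (u t) - L t a (u a - Q a (u a)))) {a..t}"
      by (rule has_integral_spike_finite[of "{}", OF _ _ voc_stable_has_integral[OF V \<open>a \<le> t\<close>]])
         (auto simp: green_def)
  next
    fix b assume "t \<le> b"
    show "((\<lambda>\<tau>. green L Q t \<tau> (k \<tau>)) has_integral (Q t (u t) - back_op L Q t b (Q b (u b)))) {t..b}"
    proof (cases "t = b")
      case True
      then show ?thesis using back_op_refl by (simp add: has_integral_refl)
    next
      case False
      with \<open>t \<le> b\<close> have "t < b" by simp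
      from has_integral_neg[OF voc_unstable_has_integral[OF V this]]
      have "((\<lambda>\<tau>. - back_op L Q t \<tau> (Q \<tau> (k \<tau>))) has_integral
          (Q t (u t) - back_op L Q t b (Q b (u b)))) {t..b}"
        by simp
      then show ?thesis
        by (rule has_integral_spike_finite[of "{t}", rotated 2]) (auto simp: green_def)
    qed
  qed
  then show ?thesis by simp
qed

lemma stable_part_le:
  assumes V: "voc_solution u k" and bd: "\<And>\<tau>. norm (u \<tau>) \<le> \<Phi>"
    and k: "\<And>\<tau>. exp (\<nu> * \<bar>\<tau>\<bar>) * norm (k \<tau>) \<le> C"
  shows "norm (u t - Q t (u t)) \<le> D * C / \<alpha>"
proof (rule norm_le_of_eventually_le_add_null[OF stable_boundary_tendsto_0[OF bd]])
  have C: "0 \<le> C" using k[of 0] by (smt (verit) exp_gt_zero norm_ge_zero zero_le_mult_iff)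
  have "norm (u t - Q t (u t)) \<le> D * C / \<alpha> + norm (L t a (u a - Q a (u a)))" if at: "a \<le> t" for a
  proof -
    let ?I = "u t - Q t (u t) - L t a (u a - Q a (u a))"
    have "norm ?I \<le> D * C * ((1 - exp (- \<alpha> * (t - a))) / \<alpha>)"
    proof (rule norm_le_of_has_integral_bound[OF voc_stable_has_integral[OF V at]
          has_integral_mult_right[OF has_integral_exp_decay[OF at \<alpha>_pos]]])
      fix \<tau> assume "\<tau> \<in> {a..t}"
      then have "norm (L t \<tau> (k \<tau> - Q \<tau> (k \<tau>)))
          \<le> D * exp (- \<alpha> * (t - \<tau>)) * (exp (\<nu> * \<bar>\<tau>\<bar>) * norm (k \<tau>))"
        using stable_le[of \<tau> t "k \<tau>"] by (simp add: algebra_simps)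
      also have "\<dots> \<le> D * exp (- \<alpha> * (t - \<tau>)) * C"
        using k[of \<tau>] D_ge_1 by (intro mult_left_mono) auto
      finally show "norm (L t \<tau> (k \<tau> - Q \<tau> (k \<tau>))) \<le> D * C * exp (- \<alpha> * (t - \<tau>))"
        by (simp add: algebra_simps)
    qed
    also have "\<dots> \<le> D * C * (1 / \<alpha>)"
      using D_ge_1 C \<alpha>_pos by (intro mult_left_mono divide_right_mono) auto
    finally have "norm ?I \<le> D * C / \<alpha>" by simp
    then show ?thesis using norm_triangle_ineq[of ?I "L t a (u a - Q a (u a))"] by simp
  qed
  then show "\<forall>\<^sub>F a in at_bot. norm (u t - Q t (u t)) \<le> D * C / \<alpha> + norm (L t a (u a - Q a (u a)))"
    by (auto simp: eventually_at_bot_linorder)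
qed simp

lemma unstable_part_le:
  assumes V: "voc_solution u k" and bd: "\<And>\<tau>. norm (u \<tau>) \<le> \<Phi>"
    and k: "\<And>\<tau>. exp (\<nu> * \<bar>\<tau>\<bar>) * norm (k \<tau>) \<le> C"
  shows "norm (Q t (u t)) \<le> D * C / \<alpha>"
proof (rule norm_le_of_eventually_le_add_null[OF unstable_boundary_tendsto_0[OF bd]])
  have C: "0 \<le> C" using k[of 0] by (smt (verit) exp_gt_zero norm_ge_zero zero_le_mult_iff)
  have "norm (Q t (u t)) \<le> D * C / \<alpha> + norm (back_op L Q t b (Q b (u b)))" if tb: "t < b" for b
  proof -
    let ?I = "back_op L Q t b (Q b (u b)) - Q t (u t)"
    \<comment> \<open>The dichotomy bound for the backward operator only holds for t < \<tau>, so the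
      integrand is modified at \<tau> = t.\<close>
    have "((\<lambda>\<tau>. if \<tau> = t then 0 else back_op L Q t \<tau> (Q \<tau> (k \<tau>))) has_integral ?I) {t..b}"
      by (rule has_integral_spike_finite[of "{t}", OF _ _ voc_unstable_has_integral[OF V tb]]) auto
    then have "norm ?I \<le> D * C * ((1 - exp (\<alpha> * (t - b))) / \<alpha>)"
    proof (rule norm_le_of_has_integral_bound[OF _
          has_integral_mult_right[OF has_integral_exp_growth[OF less_imp_le[OF tb] \<alpha>_pos]]])
      fix \<tau> assume \<tau>: "\<tau> \<in> {t..b}"
      show "norm (if \<tau> = t then 0 else back_op L Q t \<tau> (Q \<tau> (k \<tau>))) \<le> D * C * exp (\<alpha> * (t - \<tau>))"
      proof (cases "\<tau> = t")
        case False
        with \<tau> have "norm (back_op L Q t \<tau> (Q \<tau> (k \<tau>)))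
            \<le> D * exp (\<alpha> * (t - \<tau>)) * (exp (\<nu> * \<bar>\<tau>\<bar>) * norm (k \<tau>))"
          using unstable_le[of t \<tau> "k \<tau>"] by (simp add: algebra_simps)
        also have "\<dots> \<le> D * exp (\<alpha> * (t - \<tau>)) * C"
          using k[of \<tau>] D_ge_1 by (intro mult_left_mono) auto
        finally show ?thesis using False by (simp add: algebra_simps)
      qed (use D_ge_1 C in simp)
    qed
    also have "\<dots> \<le> D * C * (1 / \<alpha>)"
      using D_ge_1 C \<alpha>_pos by (intro mult_left_mono divide_right_mono) auto
    finally have "norm ?I \<le> D * C / \<alpha>" by simp
    then show ?thesis using norm_triangle_ineq4[of "back_op L Q t b (Q b (u b))" ?I] by simp
  qed
  then show "\<forall>\<^sub>F b in at_top. norm (Q t (u t)) \<le> D * C / \<alpha> + norm (back_op L Q t b (Q b (u b)))"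
    by (auto simp: eventually_at_top_linorder intro!: exI[of _ "t + 1"])
qed simp

lemma bounded_voc_solution_le:
  assumes "voc_solution u k" "\<And>\<tau>. norm (u \<tau>) \<le> \<Phi>"
    and "\<And>\<tau>. exp (\<nu> * \<bar>\<tau>\<bar>) * norm (k \<tau>) \<le> C"
  shows "norm (u t) \<le> 2 * D * C / \<alpha>"
proof -
  have "norm (u t) \<le> D * C / \<alpha> + D * C / \<alpha>"
    using norm_triangle_sub[of "u t" "Q t (u t)"]
      stable_part_le[OF assms, of t] unstable_part_le[OF assms, of t]
    by linarith
  then show ?thesis by (simp add: algebra_simps)
qed

theorem isolated_global_solution:
  assumes \<rho>: "((rho f Df \<xi> \<nu>) \<longlongrightarrow> 0) (at_right 0)"
  obtains \<epsilon> where "\<epsilon> > 0" "\<And>\<phi>. global_solution S \<phi> \<Longrightarrow> bounded (range \<phi>) \<Longrightarrow>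
    (\<And>t. norm (\<phi> t - \<xi> t) \<le> \<epsilon>) \<Longrightarrow> \<phi> = \<xi>"
proof -
  define c where "c = \<alpha> / (4 * D)"
  have "\<forall>\<^sub>F \<epsilon> in at_right 0. rho f Df \<xi> \<nu> \<epsilon> < ereal c"
    by (rule order_tendstoD(2)[OF \<rho>]) (use \<alpha>_pos D_ge_1 in \<open>simp add: c_def\<close>)
  then obtain \<epsilon> where \<epsilon>: "\<epsilon> > 0" "rho f Df \<xi> \<nu> \<epsilon> < ereal c"
    by (metis eventually_at_right_field field_lbound_gt_zero zero_less_one)
  show ?thesis
  proof (rule that[OF \<epsilon>(1)])
    fix \<phi> assume \<phi>: "global_solution S \<phi>" "bounded (range \<phi>)" "\<And>t. norm (\<phi> t - \<xi> t) \<le> \<epsilon>"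
    define \<psi> where "\<psi> \<tau> = \<phi> \<tau> - \<xi> \<tau>" for \<tau>
    define \<Psi> where "\<Psi> = (SUP \<tau>. norm (\<psi> \<tau>))"
    have \<psi>_le: "norm (\<psi> \<tau>) \<le> \<Psi>" for \<tau>
      unfolding \<Psi>_def by (rule cSUP_upper) (use \<phi>(3) in \<open>auto simp: \<psi>_def intro: bdd_aboveI2[where M = \<epsilon>]\<close>)
    have V: "voc_solution \<psi> (\<lambda>\<tau>. nonlinear_part \<phi> \<tau> - nonlinear_part \<xi> \<tau>)"
      unfolding \<psi>_def
      by (rule voc_solution_diff[OF voc_solution_of_global_solution voc_solution_of_global_solution])
         (use \<phi>(1) \<xi>_solution in auto)
    have "exp (\<nu> * \<bar>\<tau>\<bar>) * norm (nonlinear_part \<phi> \<tau> - nonlinear_part \<xi> \<tau>) \<le> c * \<Psi>" for \<tau>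
    proof -
      have "nonlinear_part \<phi> \<tau> - nonlinear_part \<xi> \<tau>
          = f \<tau> (\<xi> \<tau> + \<psi> \<tau>) - f \<tau> (\<xi> \<tau>) - Df \<tau> (\<xi> \<tau>) (\<psi> \<tau>)"
        by (simp add: nonlinear_part_def \<psi>_def blinfun.diff_right)
      then have "exp (\<nu> * \<bar>\<tau>\<bar>) * norm (nonlinear_part \<phi> \<tau> - nonlinear_part \<xi> \<tau>) \<le> c * norm (\<psi> \<tau>)"
        using linearisation_remainder_le_of_rho_less[OF \<epsilon>(2) \<phi>(3)[of \<tau>], where t = \<tau>]
        by (simp add: \<psi>_def)
      also have "\<dots> \<le> c * \<Psi>"
        using \<psi>_le \<alpha>_pos D_ge_1 by (intro mult_left_mono) (auto simp: c_def)
      finally show ?thesis .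
    qed
    from bounded_voc_solution_le[OF V \<psi>_le this]
    have "norm (\<psi> t) \<le> \<Psi> / 2" for t
      using \<alpha>_pos D_ge_1 by (simp add: c_def)
    then have "\<Psi> \<le> \<Psi> / 2"
      unfolding \<Psi>_def by (intro cSUP_least) (auto simp: \<Psi>_def)
    then have "norm (\<psi> \<tau>) \<le> 0" for \<tau>
      using \<psi>_le[of \<tau>] by linarith
    then show "\<phi> = \<xi>" by (simp add: \<psi>_def fun_eq_iff)
  qed
qed

end

theorem mainTheorem10:
  fixes T :: "real \<Rightarrow> real \<Rightarrow> 'a::banach \<Rightarrow>\<^sub>L 'a"
    and f :: "real \<Rightarrow> 'a \<Rightarrow> 'a"
    and Df :: "real \<Rightarrow> 'a \<Rightarrow> 'a \<Rightarrow>\<^sub>L 'a"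
    and S :: "real \<Rightarrow> real \<Rightarrow> 'a \<Rightarrow> 'a"
    and \<xi> :: "real \<Rightarrow> 'a"
    and L :: "real \<Rightarrow> real \<Rightarrow> 'a \<Rightarrow>\<^sub>L 'a"
    and Q :: "real \<Rightarrow> 'a \<Rightarrow>\<^sub>L 'a"
    and D \<nu> \<alpha> :: real
  assumes T_proc: "linear_evolution_process T"
    and f_cont: "continuous_on UNIV (\<lambda>(t, x). f t x)"
    and f_deriv: "\<And>t x. (f t has_derivative blinfun_apply (Df t x)) (at x)"
    and Df_cont: "continuous_on UNIV (\<lambda>(t, x). Df t x)"
    and S_proc: "evolution_process S"
    and S_mild_int: "\<And>t s y. s \<le> t \<Longrightarrow> (\<lambda>\<tau>. T t \<tau> (f \<tau> (S \<tau> s y))) integrable_on {s..t}"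
    and S_mild: "\<And>t s y. s \<le> t \<Longrightarrow>
                   S t s y = T t s y + integral {s..t} (\<lambda>\<tau>. T t \<tau> (f \<tau> (S \<tau> s y)))"
    and \<xi>_sol: "global_solution S \<xi>"
    and L_proc: "linear_evolution_process L"
    and L_int: "\<And>t s x. s \<le> t \<Longrightarrow> (\<lambda>\<tau>. T t \<tau> (Df \<tau> (\<xi> \<tau>) (L \<tau> s x))) integrable_on {s..t}"
    and L_eq: "\<And>t s x. s \<le> t \<Longrightarrow>
                 L t s x = T t s x + integral {s..t} (\<lambda>\<tau>. T t \<tau> (Df \<tau> (\<xi> \<tau>) (L \<tau> s x)))"
    and dich: "nonuniform_exp_dichotomy L Q D \<nu> \<alpha>"
    and \<alpha>\<nu>: "\<alpha> > \<nu>"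
  shows "(\<forall>\<phi>. global_solution S \<phi> \<and> bounded (range \<phi>) \<longrightarrow>
            (\<forall>t. ((\<lambda>\<tau>. green L Q t \<tau> (f \<tau> (\<phi> \<tau>) - Df \<tau> (\<xi> \<tau>) (\<phi> \<tau>))) has_integral \<phi> t) UNIV))
       \<and> (bounded (range \<xi>) \<and> ((rho f Df \<xi> \<nu>) \<longlongrightarrow> 0) (at_right 0) \<longrightarrow>
            (\<exists>\<epsilon>>0. \<forall>\<phi>. global_solution S \<phi> \<and> bounded (range \<phi>) \<and>
                       (\<forall>t. norm (\<phi> t - \<xi> t) \<le> \<epsilon>) \<longrightarrow> \<phi> = \<xi>))"
proof -
  interpret hyperbolic_linearisation T f Df S \<xi> L Q D \<nu> \<alpha>
    by unfold_locales (use T_proc f_cont Df_cont S_proc S_mild \<xi>_sol L_proc L_int L_eq dich \<alpha>\<nu> in auto)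
  show ?thesis
  proof (intro conjI allI impI)
    fix \<phi> t assume "global_solution S \<phi> \<and> bounded (range \<phi>)"
    then obtain \<Phi> where "\<And>\<tau>. norm (\<phi> \<tau>) \<le> \<Phi>" and "voc_solution \<phi> (nonlinear_part \<phi>)"
      by (auto simp: bounded_iff intro: voc_solution_of_global_solution)
    from green_representation[OF this(2,1)]
    show "((\<lambda>\<tau>. green L Q t \<tau> (f \<tau> (\<phi> \<tau>) - Df \<tau> (\<xi> \<tau>) (\<phi> \<tau>))) has_integral \<phi> t) UNIV"
      by (simp add: nonlinear_part_def)
  next
    assume "bounded (range \<xi>) \<and> ((rho f Df \<xi> \<nu>) \<longlongrightarrow> 0) (at_right 0)"
    then obtain \<epsilon> where "\<epsilon> > 0" "\<And>\<phi>. global_solution S \<phi> \<Longrightarrow> bounded (range \<phi>) \<Longrightarrow>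
        (\<And>t. norm (\<phi> t - \<xi> t) \<le> \<epsilon>) \<Longrightarrow> \<phi> = \<xi>"
      using isolated_global_solution by blast
    then show "\<exists>\<epsilon>>0. \<forall>\<phi>. global_solution S \<phi> \<and> bounded (range \<phi>) \<and>
                       (\<forall>t. norm (\<phi> t - \<xi> t) \<le> \<epsilon>) \<longrightarrow> \<phi> = \<xi>"
      by blast
  qed
qed

end
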